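(* Let $k\ge 1$ and let $R$ be a finite abelian group of cardinality $r$. There exists a constant $c_1=c_1(r,k)$ such that for any $n \geq 10k^2$, any $m \geq \frac{n}{2k}$, and any $\theta$ with $\frac{1}{2k}\le\theta\le 1$, $$g_n(m,\theta) \leq \Big( c_1 \cdot n^{(k-1)\left(1-\theta\left(1-\frac{1}{2k^2}\right)\right)} \Big)^m.$$
   Context: $\Delta_{n-1}$ is the simplex on vertex set $[n]$; $\Delta_{n-1}(j)$ denotes its set of $j$-dimensional faces. For $j\ge 0$, $C^j(\Delta_{n-1})$ is the group of $R$-valued skew-symmetric functions on ordered $j$-simplices, with coboundary $d_j\phi([v_0,\dots,v_{j+1}])=\sum_{i=0}^{j+1}(-1)^i\phi([v_0,\dots,\widehat{v_i},\dots,v_{j+1}])$; in addition $C^{-1}=R$ with $d_{-1}a(v)=a$. For $\phi\in C^{k-1}(\Delta_{n-1})$: $\mathrm{supp}(\phi)=\{\sigma\in\Delta_{n-1}(k-1):\phi(\sigma)\ne 0\}$ (a family of $k$-subsets of $[n]$); $b(\phi)=|\{\tau\in\Delta_{n-1}(k): d_{k-1}\phi(\tau)\neq 0\}|$; $w(\phi)=\min\{|\mathrm{supp}(\phi+d_{k-2}\psi)|:\psi\in C^{k-2}(\Delta_{n-1})\}$. A family $\mathcal{F}\subset\binom{[n]}{k}$ is connected if any two members are joined by a sequence in $\mathcal{F}$ whose consecutive members share exactly $k-1$ elements. $\mathcal{G}_n=\{0\ne\phi\in C^{k-1}(\Delta_{n-1}): \mathrm{supp}(\phi)\text{ connected},\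 w(\phi)=|\mathrm{supp}(\phi)|\}$, and $g_n(m,\theta)$ is the number of $\phi\in\mathcal{G}_n$ with $|\mathrm{supp}(\phi)|=m$ and $b(\phi)=(1-\theta)mn$. *)

theory Defs
  imports Complex_Main
begin

text \<open>Ordered simplices of the simplex on vertex set [n] = {1..n}, indexed by the
  number q of vertices (q = j+1 for a j-simplex). For q = 0 the only such list is [],
  so cochains with q = 0 are exactly the elements of R, i.e. C^{-1} = R.\<close>

definition simplex_lists :: "nat \<Rightarrow> nat \<Rightarrow> nat list set" where
  "simplex_lists n q = {xs. length xs = q \<and> distinct xs \<and> set xs \<subseteq> {1..n}}"

definition swap_adj :: "nat \<Rightarrow> 'a list \<Rightarrow> 'a list" where
  "swap_adj i xs = xs[i := xs ! Suc i, Suc i := xs ! i]"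

text \<open>C^{q-1}: skew-symmetric R-valued functions on ordered (q-1)-simplices
  (extended by 0 outside). Skew-symmetry: swapping two adjacent vertices negates the
  value (adjacent transpositions generate all permutations).\<close>

definition cochains :: "nat \<Rightarrow> nat \<Rightarrow> (nat list \<Rightarrow> 'r::ab_group_add) set" where
  "cochains n q = {\<phi>. (\<forall>xs. xs \<notin> simplex_lists n q \<longrightarrow> \<phi> xs = 0) \<and>
      (\<forall>xs \<in> simplex_lists n q. \<forall>i. Suc i < q \<longrightarrow> \<phi> (swap_adj i xs) = - \<phi> xs)}"

definition del_nth :: "nat \<Rightarrow> 'a list \<Rightarrow> 'a list" where
  "del_nth i xs = take i xs @ drop (Suc i) xs"

definition cobound :: "nat \<Rightarrow> nat \<Rightarrow> (nat list \<Rightarrow> 'r::ab_group_add) \<Rightarrow> nat list \<Rightarrow> 'r" where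
  "cobound n q \<phi> = (\<lambda>xs. if xs \<in> simplex_lists n (Suc q)
      then (\<Sum>i<Suc q. (if even i then \<phi> (del_nth i xs) else - \<phi> (del_nth i xs)))
      else 0)"

definition csupp :: "nat \<Rightarrow> nat \<Rightarrow> (nat list \<Rightarrow> 'r::ab_group_add) \<Rightarrow> nat set set" where
  "csupp n q \<phi> = {set xs | xs. xs \<in> simplex_lists n q \<and> \<phi> xs \<noteq> 0}"

definition cbnd :: "nat \<Rightarrow> nat \<Rightarrow> (nat list \<Rightarrow> 'r::ab_group_add) \<Rightarrow> nat" where
  "cbnd n q \<phi> = card {set xs | xs. xs \<in> simplex_lists n (Suc q) \<and> cobound n q \<phi> xs \<noteq> 0}"

definition cweight :: "nat \<Rightarrow> nat \<Rightarrow> (nat list \<Rightarrow> 'r::ab_group_add) \<Rightarrow> nat" where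
  "cweight n q \<phi> = Inf {card (csupp n q (\<lambda>xs. \<phi> xs + cobound n (q - 1) \<psi> xs)) | \<psi>.
      \<psi> \<in> (cochains n (q - 1) :: (nat list \<Rightarrow> 'r) set)}"

definition family_connected :: "nat \<Rightarrow> nat set set \<Rightarrow> bool" where
  "family_connected k F = (\<forall>A\<in>F. \<forall>B\<in>F. \<exists>ps. ps \<noteq> [] \<and> hd ps = A \<and> last ps = B \<and>
      set ps \<subseteq> F \<and> (\<forall>i. Suc i < length ps \<longrightarrow> card (ps ! i \<inter> ps ! Suc i) = k - 1))"

definition Gset :: "nat \<Rightarrow> nat \<Rightarrow> (nat list \<Rightarrow> 'r::ab_group_add) set" where
  "Gset n k = {\<phi>. \<phi> \<in> cochains n k \<and> \<phi> \<noteq> (\<lambda>_. 0) \<and> family_connected k (csupp n k \<phi>)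
      \<and> cweight n k \<phi> = card (csupp n k \<phi>)}"

definition gcount :: "'r::ab_group_add itself \<Rightarrow> nat \<Rightarrow> nat \<Rightarrow> nat \<Rightarrow> real \<Rightarrow> nat" where
  "gcount _ n k m \<theta> = card {\<phi> \<in> (Gset n k :: (nat list \<Rightarrow> 'r) set).
      card (csupp n k \<phi>) = m \<and> real (cbnd n k \<phi>) = (1 - \<theta>) * real m * real n}"

end

theory Submission
  imports Defs "HOL-Library.FuncSet"
begin

(* Let F be the support of \<phi>, a family of m k-subsets of [n]. Call a (k-1)-set heavy if at
  least t = n/(8k^4) members of F contain it (double counting leaves at most 8k^5 m/n of them), and
  a member of F light if it contains no heavy set. For a light \<sigma> all but at most k + kt vertices
  v are free, i.e. \<sigma> is the only member of F inside \<sigma> + v, and then d\<phi> does not vanish on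
  \<sigma> + v. Hence b(\<phi>) \<ge> (n - k - kt) \<cdot> #light, which leaves at most about
  (1 - \<theta>(1 - 1/(2k^2)))m light members. So F is determined by its heavy sets, a subset of the
  at most 8k^5 m faces containing one of them and a small family of light members, and \<phi> by F
  together with at most m k^k values in R; counting these choices gives the bound. *)

lemma power_div_fact_le_exp:
  fixes x :: real
  assumes "0 \<le> x"
  shows "x ^ j / fact j \<le> exp x"
proof -
  have "summable (\<lambda>i. x ^ i / fact i)"
    using summable_exp[of x] by (simp add: divide_inverse mult.commute)
  then have "(\<Sum>i\<in>{j}. x ^ i / fact i) \<le> (\<Sum>i. x ^ i / fact i)"
    by (rule sum_le_suminf) (use assms in auto)
  also have "\<dots> = exp x"
    by (simp add: exp_def divide_inverse mult.commute scaleR_conv_of_real)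
  finally show ?thesis
    by simp
qed

lemma real_add_one_le_two_power: "real n + 1 \<le> 2 ^ n"
proof -
  have "n + 1 \<le> (2::nat) ^ n"
    using less_exp[of n] by (simp add: Suc_le_eq)
  then have "real (n + 1) \<le> real ((2::nat) ^ n)"
    by (simp only: of_nat_le_iff)
  then show ?thesis
    by simp
qed

lemma powr_div_self_le_two_powr:
  assumes "1 \<le> n" and "0 \<le> a"
  shows "real n powr (a / real n) \<le> 2 powr a"
proof -
  have "real n \<le> 2 ^ n"
    using real_add_one_le_two_power[of n] by linarith
  then have "real n \<le> 2 powr real n"
    by (simp add: powr_realpow)
  then have "real n powr (1 / real n) \<le> (2 powr real n) powr (1 / real n)"
    using assms(1) by (simp add: powr_mono2)
  also have "\<dots> = 2"
    using assms(1) by (simp add: powr_powr)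
  finally have "(real n powr (1 / real n)) powr a \<le> 2 powr a"
    using assms by (simp add: powr_mono2)
  then show ?thesis
    by (simp add: powr_powr)
qed

lemma card_subsets_le_power_div_fact:
  assumes "finite S"
  shows "real (card {A. A \<subseteq> S \<and> card A = j}) \<le> real (card S) ^ j / fact j"
proof -
  have "real ((card S choose j) * fact j) \<le> real (card S ^ j)"
    using binomial_fact_pow[of "card S" j] by (simp only: of_nat_le_iff)
  then show ?thesis
    by (simp add: n_subsets[OF assms] pos_le_divide_eq)
qed

lemma card_subsets_card_bounded_le:
  assumes "finite S" and "0 \<le> b"
    and "\<And>j. j \<le> s \<Longrightarrow> P j \<Longrightarrow> real (card {A. A \<subseteq> S \<and> card A = j}) \<le> b"
  shows "real (card {A. A \<subseteq> S \<and> card A \<le> s \<and> P (card A)}) \<le> real (s + 1) * b"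
proof -
  define Q where "Q j = {A. A \<subseteq> S \<and> card A = j \<and> P j}" for j
  have "{A. A \<subseteq> S \<and> card A \<le> s \<and> P (card A)} = (\<Union>j\<le>s. Q j)"
    by (auto simp: Q_def)
  moreover have "finite (Q j)" for j
    using assms(1) by (auto simp: Q_def)
  ultimately have "card {A. A \<subseteq> S \<and> card A \<le> s \<and> P (card A)} \<le> (\<Sum>j\<le>s. card (Q j))"
    by (simp add: card_UN_le)
  then have "real (card {A. A \<subseteq> S \<and> card A \<le> s \<and> P (card A)}) \<le> (\<Sum>j\<le>s. real (card (Q j)))"
    by (simp flip: of_nat_sum)
  also have "\<dots> \<le> (\<Sum>j\<le>s. b)"
  proof (rule sum_mono)
    fix j assume "j \<in> {..s}"
    then show "real (card (Q j)) \<le> b"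
      using assms(2) assms(3)[of j] by (cases "P j") (simp_all add: Q_def)
  qed
  finally show ?thesis
    by simp
qed

lemma bij_betw_restrict_functions_supported_in:
  "bij_betw (\<lambda>f. restrict f L) {f :: 'a \<Rightarrow> 'b::zero. \<forall>x. x \<notin> L \<longrightarrow> f x = 0} (L \<rightarrow>\<^sub>E UNIV)"
proof (rule bij_betwI')
  fix f g :: "'a \<Rightarrow> 'b"
  assume f: "f \<in> {f. \<forall>x. x \<notin> L \<longrightarrow> f x = 0}" and g: "g \<in> {f. \<forall>x. x \<notin> L \<longrightarrow> f x = 0}"
  show "(restrict f L = restrict g L) = (f = g)"
  proof
    assume eq: "restrict f L = restrict g L"
    show "f = g"
    proof
      fix x
      show "f x = g x"
        using fun_cong[OF eq, of x] f g by (cases "x \<in> L") auto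
    qed
  qed simp
next
  fix h assume "h \<in> L \<rightarrow>\<^sub>E (UNIV :: 'b set)"
  then show "\<exists>f\<in>{f. \<forall>x. x \<notin> L \<longrightarrow> f x = 0}. h = restrict f L"
    by (intro bexI[of _ "\<lambda>x. if x \<in> L then h x else 0"]) (auto simp: PiE_def extensional_def)
qed simp

lemma
  fixes L :: "'a set"
  assumes "finite L"
  shows finite_functions_supported_in:
      "finite {f :: 'a \<Rightarrow> 'b::{finite, zero}. \<forall>x. x \<notin> L \<longrightarrow> f x = 0}"
    and card_functions_supported_in:
      "card {f :: 'a \<Rightarrow> 'b::{finite, zero}. \<forall>x. x \<notin> L \<longrightarrow> f x = 0} = card (UNIV :: 'b set) ^ card L"
proof -
  note bij = bij_betw_restrict_functions_supported_in[of L, where 'b = 'b]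
  have "finite (L \<rightarrow>\<^sub>E (UNIV :: 'b set))"
    using assms by (simp add: finite_PiE)
  then show "finite {f :: 'a \<Rightarrow> 'b. \<forall>x. x \<notin> L \<longrightarrow> f x = 0}"
    using bij_betw_finite[OF bij] by simp
  show "card {f :: 'a \<Rightarrow> 'b. \<forall>x. x \<notin> L \<longrightarrow> f x = 0} = card (UNIV :: 'b set) ^ card L"
    using bij_betw_same_card[OF bij] assms by (simp add: card_PiE)
qed

definition faces :: "nat \<Rightarrow> nat \<Rightarrow> nat set set" where
  "faces n j = {A. A \<subseteq> {1..n} \<and> card A = j}"

lemma finite_faces: "finite (faces n j)"
  by (rule finite_subset[of _ "Pow {1..n}"]) (auto simp: faces_def)

lemma faces_memD:
  assumes "A \<in> faces n j"
  shows "finite A" "card A = j" "A \<subseteq> {1..n}"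
  using assms finite_subset[of A "{1..n}"] by (auto simp: faces_def)

lemma card_faces_le: "card (faces n j) \<le> n ^ j"
proof -
  have "card (faces n j) = n choose j"
    using n_subsets[of "{1..n}" j] by (simp add: faces_def)
  then show ?thesis
    by (cases "j \<le> n") (simp_all add: binomial_le_pow binomial_eq_0)
qed

lemma card_faces_le_two_power: "real (card (faces n j)) \<le> (2 ^ n) ^ j"
proof -
  have "real (card (faces n j)) \<le> real n ^ j"
    using card_faces_le[of n j] by (simp flip: of_nat_power)
  also have "\<dots> \<le> (2 ^ n) ^ j"
  proof (rule power_mono)
    show "real n \<le> 2 ^ n"
      using real_add_one_le_two_power[of n] by linarith
  qed simp
  finally show ?thesis .
qed

lemma card_facets:
  assumes "finite \<sigma>" and "card \<sigma> = k" and "1 \<le> k"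
  shows "card {B. B \<subseteq> \<sigma> \<and> card B = k - 1} = k"
  using n_subsets[OF assms(1), of "k - 1"] assms(2,3) binomial_symmetric[of 1 k] by simp

lemma csupp_subset_faces: "csupp n k \<phi> \<subseteq> faces n k"
  by (auto simp: csupp_def faces_def simplex_lists_def distinct_card)

lemma finite_csupp: "finite (csupp n k \<phi>)"
  by (rule finite_subset[OF csupp_subset_faces finite_faces])

lemma cochain_nonzero_imp_csupp:
  assumes "\<phi> \<in> cochains n k" and "\<phi> xs \<noteq> 0"
  shows "length xs = k" "set xs \<in> csupp n k \<phi>"
proof -
  have "xs \<in> simplex_lists n k"
    using assms by (auto simp: cochains_def)
  then show "length xs = k" "set xs \<in> csupp n k \<phi>"
    using assms(2) by (auto simp: simplex_lists_def csupp_def)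
qed

lemma finite_cochains: "finite (cochains n q :: (nat list \<Rightarrow> 'r::{finite, ab_group_add}) set)"
proof -
  have "finite (simplex_lists n q)"
    by (rule finite_subset[OF _ finite_lists_length_eq[OF finite_atLeastAtMost[of 1 n], of q]])
      (auto simp: simplex_lists_def)
  then have "finite {\<phi> :: nat list \<Rightarrow> 'r. \<forall>xs. xs \<notin> simplex_lists n q \<longrightarrow> \<phi> xs = 0}"
    by (rule finite_functions_supported_in)
  then show ?thesis
    by (rule finite_subset[rotated]) (auto simp: cochains_def)
qed

lemma del_nth_in_simplex_lists:
  assumes "xs \<in> simplex_lists n (Suc q)" and "i < Suc q"
  shows "del_nth i xs \<in> simplex_lists n q"
proof -
  have "distinct xs" "length xs = Suc q" "set xs \<subseteq> {1..n}"
    using assms(1) by (auto simp: simplex_lists_def)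
  moreover have "set (del_nth i xs) \<subseteq> set xs"
    by (auto simp: del_nth_def dest: in_set_takeD in_set_dropD)
  moreover have "distinct (del_nth i xs)"
    using \<open>distinct xs\<close> set_take_disj_set_drop_if_distinct[of xs i "Suc i"]
    by (auto simp: del_nth_def)
  ultimately show ?thesis
    using assms(2) by (auto simp: simplex_lists_def del_nth_def)
qed

text \<open>If \<open>set ys\<close> is the only support face inside \<open>set ys \<union> {v}\<close>, only the last term of the
  coboundary at \<open>ys @ [v]\<close> survives.\<close>

lemma cobound_snoc_nonzero:
  fixes \<phi> :: "nat list \<Rightarrow> 'r::ab_group_add"
  assumes ys: "ys \<in> simplex_lists n k" and nz: "\<phi> ys \<noteq> 0"
    and v: "v \<in> {1..n}" "v \<notin> set ys"
    and unique: "\<And>zs. zs \<in> simplex_lists n k \<Longrightarrow> \<phi> zs \<noteq> 0 \<Longrightarrow> set zs \<subseteq> insert v (set ys)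
      \<Longrightarrow> set zs = set ys"
  shows "ys @ [v] \<in> simplex_lists n (Suc k)" and "cobound n k \<phi> (ys @ [v]) \<noteq> 0"
proof -
  have len: "length ys = k"
    using ys by (simp add: simplex_lists_def)
  show xs: "ys @ [v] \<in> simplex_lists n (Suc k)"
    using ys v by (auto simp: simplex_lists_def)
  have "\<phi> (del_nth i (ys @ [v])) = 0" if "i < k" for i
  proof (rule ccontr)
    assume "\<phi> (del_nth i (ys @ [v])) \<noteq> 0"
    with del_nth_in_simplex_lists[OF xs, of i] that
    have "del_nth i (ys @ [v]) \<in> simplex_lists n k" "\<phi> (del_nth i (ys @ [v])) \<noteq> 0"
      by simp_all
    moreover have "set (del_nth i (ys @ [v])) \<subseteq> insert v (set ys)"
      by (auto simp: del_nth_def dest: in_set_takeD in_set_dropD)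
    ultimately have "set (del_nth i (ys @ [v])) = set ys"
      by (rule unique)
    moreover have "v \<in> set (del_nth i (ys @ [v]))"
      using len that by (simp add: del_nth_def)
    ultimately show False
      using v by simp
  qed
  moreover have "del_nth k (ys @ [v]) = ys"
    using len by (simp add: del_nth_def)
  ultimately have "cobound n k \<phi> (ys @ [v]) = (if even k then \<phi> ys else - \<phi> ys)"
    using xs by (simp add: cobound_def sum.neutral)
  then show "cobound n k \<phi> (ys @ [v]) \<noteq> 0"
    using nz by simp
qed

section \<open>Heavy faces, light members and free extensions\<close>

definition face_degree :: "nat set set \<Rightarrow> nat set \<Rightarrow> nat" where
  "face_degree F B = card {\<sigma> \<in> F. B \<subseteq> \<sigma>}"

definition heavy_faces :: "nat \<Rightarrow> nat \<Rightarrow> real \<Rightarrow> nat set set \<Rightarrow> nat set set" where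
  "heavy_faces n k t F = {B \<in> faces n (k - 1). t \<le> real (face_degree F B)}"

definition faces_above :: "nat \<Rightarrow> nat \<Rightarrow> nat set set \<Rightarrow> nat set set" where
  "faces_above n k H = {\<sigma> \<in> faces n k. \<exists>B\<in>H. B \<subseteq> \<sigma>}"

definition light_members :: "nat \<Rightarrow> nat \<Rightarrow> real \<Rightarrow> nat set set \<Rightarrow> nat set set" where
  "light_members n k t F = F - faces_above n k (heavy_faces n k t F)"

definition link :: "nat \<Rightarrow> nat set set \<Rightarrow> nat set \<Rightarrow> nat set" where
  "link n F B = {v \<in> {1..n}. v \<notin> B \<and> insert v B \<in> F}"

definition free_extensions :: "nat \<Rightarrow> nat set set \<Rightarrow> nat set \<Rightarrow> nat set" where
  "free_extensions n F \<sigma> = {v \<in> {1..n}. v \<notin> \<sigma> \<and> (\<forall>\<sigma>'\<in>F. \<sigma>' \<subseteq> insert v \<sigma> \<longrightarrow> \<sigma>' = \<sigma>)}"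

lemma card_heavy_faces_le:
  assumes F: "F \<subseteq> faces n k" and k: "1 \<le> k"
  shows "real (card (heavy_faces n k t F)) * t \<le> real (k * card F)"
proof -
  let ?H = "heavy_faces n k t F"
  let ?facets = "\<lambda>\<sigma>. {B. B \<subseteq> \<sigma> \<and> card B = k - 1}"
  have finF: "finite F"
    using F finite_faces finite_subset by blast
  have finH: "finite ?H"
    using finite_faces[of n "k - 1"] by (simp add: heavy_faces_def)
  have fin_facets: "finite (?facets \<sigma>)" if "\<sigma> \<in> F" for \<sigma>
    using faces_memD(1)[of \<sigma> n k] that F by auto
  have "real (card ?H) * t \<le> (\<Sum>B\<in>?H. real (face_degree F B))"
    using sum_mono[of ?H "\<lambda>_. t" "\<lambda>B. real (face_degree F B)"]
    by (simp add: heavy_faces_def mult.commute)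
  also have "\<dots> = real (card (SIGMA B:?H. {\<sigma> \<in> F. B \<subseteq> \<sigma>}))"
    using finH finF by (simp add: face_degree_def)
  also have "card (SIGMA B:?H. {\<sigma> \<in> F. B \<subseteq> \<sigma>}) \<le> card (SIGMA \<sigma>:F. ?facets \<sigma>)"
  proof (rule card_inj_on_le)
    show "inj_on (\<lambda>(B, \<sigma>). (\<sigma>, B)) (SIGMA B:?H. {\<sigma> \<in> F. B \<subseteq> \<sigma>})"
      by (rule inj_onI) auto
    show "(\<lambda>(B, \<sigma>). (\<sigma>, B)) ` (SIGMA B:?H. {\<sigma> \<in> F. B \<subseteq> \<sigma>}) \<subseteq> (SIGMA \<sigma>:F. ?facets \<sigma>)"
      by (auto simp: heavy_faces_def faces_def)
    show "finite (SIGMA \<sigma>:F. ?facets \<sigma>)"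
      using finF fin_facets by (rule finite_SigmaI)
  qed
  also have "card (SIGMA \<sigma>:F. ?facets \<sigma>) = (\<Sum>\<sigma>\<in>F. card (?facets \<sigma>))"
    using finF fin_facets by simp
  also have "\<dots> = (\<Sum>\<sigma>\<in>F. k)"
  proof (rule sum.cong[OF refl])
    fix \<sigma> assume "\<sigma> \<in> F"
    then have "finite \<sigma>" "card \<sigma> = k"
      using F faces_memD[of \<sigma> n k] by auto
    then show "card (?facets \<sigma>) = k"
      using k by (rule card_facets)
  qed
  finally show ?thesis
    by (simp add: mult.commute)
qed

lemma card_faces_above_le:
  assumes H: "H \<subseteq> faces n (k - 1)" and k: "1 \<le> k"
  shows "card (faces_above n k H) \<le> card H * n"
proof -
  have finH: "finite H"
    using H finite_faces finite_subset by blast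
  have "faces_above n k H \<subseteq> (\<lambda>(B, v). insert v B) ` (H \<times> {1..n})"
  proof
    fix \<sigma> assume "\<sigma> \<in> faces_above n k H"
    then obtain B where \<sigma>: "\<sigma> \<in> faces n k" and B: "B \<in> H" "B \<subseteq> \<sigma>"
      by (auto simp: faces_above_def)
    have "card (\<sigma> - B) = 1"
      using faces_memD[OF \<sigma>] faces_memD(2)[of B n "k - 1"] B H k
      by (auto simp: card_Diff_subset finite_subset)
    then obtain v where "\<sigma> - B = {v}"
      by (auto simp: card_Suc_eq)
    then have "\<sigma> = insert v B" "v \<in> {1..n}"
      using B(2) faces_memD(3)[OF \<sigma>] by auto
    then show "\<sigma> \<in> (\<lambda>(B, v). insert v B) ` (H \<times> {1..n})"
      using B(1) by force
  qed
  then have "card (faces_above n k H) \<le> card ((\<lambda>(B, v). insert v B) ` (H \<times> {1..n}))"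
    by (rule card_mono[rotated]) (simp add: finH)
  also have "\<dots> \<le> card (H \<times> {1..n})"
    by (rule card_image_le) (simp add: finH)
  finally show ?thesis
    by (simp add: card_cartesian_product)
qed

lemma light_member_facet_degree_less:
  assumes "\<sigma> \<in> light_members n k t F" and "F \<subseteq> faces n k" and "B \<subseteq> \<sigma>" and "card B = k - 1"
  shows "real (face_degree F B) < t"
proof (rule ccontr)
  assume "\<not> real (face_degree F B) < t"
  moreover have \<sigma>: "\<sigma> \<in> faces n k"
    using assms(1,2) by (auto simp: light_members_def)
  ultimately have "B \<in> heavy_faces n k t F"
    using assms(3,4) faces_memD(3)[OF \<sigma>] by (auto simp: heavy_faces_def faces_def)
  then have "\<sigma> \<in> faces_above n k (heavy_faces n k t F)"
    using \<sigma> assms(3) by (auto simp: faces_above_def)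
  with assms(1) show False
    by (simp add: light_members_def)
qed

lemma card_link_le_face_degree:
  assumes "finite F"
  shows "card (link n F B) \<le> face_degree F B"
  unfolding face_degree_def
proof (rule card_inj_on_le)
  show "inj_on (\<lambda>v. insert v B) (link n F B)"
    by (rule inj_onI) (auto simp: link_def)
  show "(\<lambda>v. insert v B) ` link n F B \<subseteq> {\<sigma> \<in> F. B \<subseteq> \<sigma>}"
    by (auto simp: link_def)
  show "finite {\<sigma> \<in> F. B \<subseteq> \<sigma>}"
    using assms by simp
qed

lemma atLeastAtMost_subset_free_extensions_links:
  assumes \<sigma>: "\<sigma> \<in> F" and F: "F \<subseteq> faces n k"
  shows "{1..n} \<subseteq> free_extensions n F \<sigma> \<union> \<sigma> \<union> (\<Union>B\<in>{B. B \<subseteq> \<sigma> \<and> card B = k - 1}. link n F B)"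
proof
  fix v assume v: "v \<in> {1..n}"
  show "v \<in> free_extensions n F \<sigma> \<union> \<sigma> \<union> (\<Union>B\<in>{B. B \<subseteq> \<sigma> \<and> card B = k - 1}. link n F B)"
  proof (cases "v \<in> free_extensions n F \<sigma> \<or> v \<in> \<sigma>")
    case False
    then obtain \<sigma>' where \<sigma>': "\<sigma>' \<in> F" "\<sigma>' \<subseteq> insert v \<sigma>" "\<sigma>' \<noteq> \<sigma>"
      using v by (auto simp: free_extensions_def)
    have fin: "finite \<sigma>" and card: "card \<sigma> = k" "card \<sigma>' = k"
      using \<sigma> \<sigma>'(1) F faces_memD by blast+
    have "v \<in> \<sigma>'"
    proof (rule ccontr)
      assume "v \<notin> \<sigma>'"
      then have "\<sigma>' \<subseteq> \<sigma>"
        using \<sigma>'(2) by auto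
      then show False
        using card_subset_eq[OF fin] card \<sigma>'(3) by metis
    qed
    then have "\<sigma>' - {v} \<in> {B. B \<subseteq> \<sigma> \<and> card B = k - 1}" "v \<in> link n F (\<sigma>' - {v})"
      using \<sigma>' card(2) v by (auto simp: link_def insert_absorb)
    then show ?thesis
      by blast
  qed blast
qed

lemma card_free_extensions_ge:
  assumes \<sigma>: "\<sigma> \<in> light_members n k t F" and F: "F \<subseteq> faces n k" and k: "1 \<le> k"
  shows "real n - real k - real k * t \<le> real (card (free_extensions n F \<sigma>))"
proof -
  define facets where "facets = {B. B \<subseteq> \<sigma> \<and> card B = k - 1}"
  have \<sigma>F: "\<sigma> \<in> F"
    using \<sigma> by (simp add: light_members_def)
  have fin\<sigma>: "finite \<sigma>" and card\<sigma>: "card \<sigma> = k"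
    using \<sigma>F F faces_memD by blast+
  have fin_facets: "finite facets"
    using fin\<sigma> by (simp add: facets_def)
  have card_link: "real (card (link n F B)) \<le> t" if "B \<in> facets" for B
  proof -
    have "card (link n F B) \<le> face_degree F B"
      by (rule card_link_le_face_degree[OF finite_subset[OF F finite_faces]])
    moreover have "real (face_degree F B) < t"
      using light_member_facet_degree_less[OF \<sigma> F] that by (simp add: facets_def)
    ultimately show ?thesis
      by (meson of_nat_le_iff le_less_trans less_imp_le)
  qed
  have "finite (free_extensions n F \<sigma> \<union> \<sigma> \<union> (\<Union>B\<in>facets. link n F B))"
    using fin\<sigma> fin_facets by (simp add: free_extensions_def link_def)
  with atLeastAtMost_subset_free_extensions_links[OF \<sigma>F F]
  have "card {1..n} \<le> card (free_extensions n F \<sigma> \<union> \<sigma> \<union> (\<Union>B\<in>facets. link n F B))"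
    unfolding facets_def by (rule card_mono[rotated])
  also have "\<dots> \<le> card (free_extensions n F \<sigma>) + card \<sigma> + (\<Sum>B\<in>facets. card (link n F B))"
    using card_Un_le[of "free_extensions n F \<sigma> \<union> \<sigma>" "\<Union>B\<in>facets. link n F B"]
      card_Un_le[of "free_extensions n F \<sigma>" \<sigma>] card_UN_le[OF fin_facets, of "link n F"]
    by linarith
  finally have "real n \<le> real (card (free_extensions n F \<sigma>)) + real k
      + (\<Sum>B\<in>facets. real (card (link n F B)))"
    using card\<sigma> by (simp flip: of_nat_sum)
  moreover have "(\<Sum>B\<in>facets. real (card (link n F B))) \<le> real k * t"
    using sum_mono[of facets "\<lambda>B. real (card (link n F B))" "\<lambda>_. t"] card_link
      card_facets[OF fin\<sigma> card\<sigma> k] by (simp add: facets_def)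
  ultimately show ?thesis
    by linarith
qed

lemma inj_on_insert_free_extensions:
  assumes "FL \<subseteq> F"
  shows "inj_on (\<lambda>(\<sigma>, v). insert v \<sigma>) (SIGMA \<sigma>:FL. free_extensions n F \<sigma>)"
proof (rule inj_onI)
  fix p q
  assume p: "p \<in> (SIGMA \<sigma>:FL. free_extensions n F \<sigma>)" and q: "q \<in> (SIGMA \<sigma>:FL. free_extensions n F \<sigma>)"
    and eq: "(\<lambda>(\<sigma>, v). insert v \<sigma>) p = (\<lambda>(\<sigma>, v). insert v \<sigma>) q"
  obtain \<sigma> v \<sigma>' v' where pq: "p = (\<sigma>, v)" "q = (\<sigma>', v')"
    by fastforce
  have \<sigma>: "\<sigma> \<in> FL" "v \<in> free_extensions n F \<sigma>" and \<sigma>': "\<sigma>' \<in> FL" "v' \<in> free_extensions n F \<sigma>'"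
    using p q pq by auto
  have ins: "insert v \<sigma> = insert v' \<sigma>'"
    using eq pq by simp
  then have "\<sigma>' \<subseteq> insert v \<sigma>"
    by auto
  then have "\<sigma>' = \<sigma>"
    using \<sigma> \<sigma>'(1) assms by (auto simp: free_extensions_def)
  with ins \<sigma>(2) \<sigma>'(2) show "p = q"
    using pq by (auto simp: free_extensions_def)
qed

lemma cobound_nonzero_at_free_extension:
  fixes \<phi> :: "nat list \<Rightarrow> 'r::ab_group_add"
  assumes \<sigma>: "\<sigma> \<in> csupp n k \<phi>" and v: "v \<in> free_extensions n (csupp n k \<phi>) \<sigma>"
  shows "\<exists>xs. insert v \<sigma> = set xs \<and> xs \<in> simplex_lists n (Suc k) \<and> cobound n k \<phi> xs \<noteq> 0"
proof -
  obtain ys where ys: "ys \<in> simplex_lists n k" "\<phi> ys \<noteq> 0" "set ys = \<sigma>"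
    using \<sigma> by (auto simp: csupp_def)
  have v_range: "v \<in> {1..n}" and v_new: "v \<notin> set ys"
    using v ys(3) by (auto simp: free_extensions_def)
  have unique: "set zs = set ys"
    if "zs \<in> simplex_lists n k" "\<phi> zs \<noteq> 0" "set zs \<subseteq> insert v (set ys)" for zs
    using that v ys(3) by (auto simp: free_extensions_def csupp_def)
  note snoc = cobound_snoc_nonzero[of ys n k \<phi> v, OF ys(1) ys(2) v_range v_new unique]
  have "insert v \<sigma> = set (ys @ [v]) \<and> ys @ [v] \<in> simplex_lists n (Suc k)
      \<and> cobound n k \<phi> (ys @ [v]) \<noteq> 0"
    using snoc ys(3) by simp
  then show ?thesis
    by blast
qed

lemma card_free_extension_pairs_le_cbnd:
  fixes \<phi> :: "nat list \<Rightarrow> 'r::ab_group_add"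
  assumes FL: "FL \<subseteq> csupp n k \<phi>"
  shows "card (SIGMA \<sigma>:FL. free_extensions n (csupp n k \<phi>) \<sigma>) \<le> cbnd n k \<phi>"
proof -
  let ?T = "{set xs | xs. xs \<in> simplex_lists n (Suc k) \<and> cobound n k \<phi> xs \<noteq> 0}"
  have "card (SIGMA \<sigma>:FL. free_extensions n (csupp n k \<phi>) \<sigma>) \<le> card ?T"
  proof (rule card_inj_on_le)
    show "inj_on (\<lambda>(\<sigma>, v). insert v \<sigma>) (SIGMA \<sigma>:FL. free_extensions n (csupp n k \<phi>) \<sigma>)"
      using FL by (rule inj_on_insert_free_extensions)
    show "(\<lambda>(\<sigma>, v). insert v \<sigma>) ` (SIGMA \<sigma>:FL. free_extensions n (csupp n k \<phi>) \<sigma>) \<subseteq> ?T"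
    proof (rule image_subsetI)
      fix p assume "p \<in> (SIGMA \<sigma>:FL. free_extensions n (csupp n k \<phi>) \<sigma>)"
      then obtain \<sigma> v where p: "p = (\<sigma>, v)" and \<sigma>: "\<sigma> \<in> FL"
        and v: "v \<in> free_extensions n (csupp n k \<phi>) \<sigma>"
        by blast
      have "\<exists>xs. insert v \<sigma> = set xs \<and> xs \<in> simplex_lists n (Suc k) \<and> cobound n k \<phi> xs \<noteq> 0"
        using cobound_nonzero_at_free_extension[OF _ v] \<sigma> FL by blast
      then show "(\<lambda>(\<sigma>, v). insert v \<sigma>) p \<in> ?T"
        unfolding p by blast
    qed
    show "finite ?T"
      by (rule finite_subset[of _ "Pow {1..n}"]) (auto simp: simplex_lists_def)
  qed
  then show ?thesis
    by (simp add: cbnd_def)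
qed

lemma light_members_mult_le_cbnd:
  fixes \<phi> :: "nat list \<Rightarrow> 'r::ab_group_add"
  assumes k: "1 \<le> k"
  shows "(real n - real k - real k * t) * real (card (light_members n k t (csupp n k \<phi>)))
    \<le> real (cbnd n k \<phi>)"
proof -
  let ?F = "csupp n k \<phi>"
  let ?FL = "light_members n k t ?F"
  have FL: "?FL \<subseteq> ?F"
    by (auto simp: light_members_def)
  have fin_free: "finite (free_extensions n ?F \<sigma>)" for \<sigma>
    by (simp add: free_extensions_def)
  have "(real n - real k - real k * t) * real (card ?FL) = (\<Sum>\<sigma>\<in>?FL. real n - real k - real k * t)"
    by simp
  also have "\<dots> \<le> (\<Sum>\<sigma>\<in>?FL. real (card (free_extensions n ?F \<sigma>)))"
    by (rule sum_mono) (rule card_free_extensions_ge[OF _ csupp_subset_faces k])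
  also have "\<dots> = real (card (SIGMA \<sigma>:?FL. free_extensions n ?F \<sigma>))"
    using finite_subset[OF FL finite_csupp] fin_free by (simp flip: of_nat_sum)
  also have "\<dots> \<le> real (cbnd n k \<phi>)"
    using card_free_extension_pairs_le_cbnd[OF FL] by simp
  finally show ?thesis .
qed

section \<open>Counting supports and cochains\<close>

lemma finite_ordered_faces: "F \<subseteq> faces n k \<Longrightarrow> finite {xs. length xs = k \<and> set xs \<in> F}"
  by (rule finite_subset[OF _ finite_lists_length_eq[OF finite_atLeastAtMost[of 1 n], of k]])
    (auto simp: faces_def)

lemma card_ordered_faces_le:
  assumes "F \<subseteq> faces n k"
  shows "card {xs. length xs = k \<and> set xs \<in> F} \<le> card F * k ^ k"
proof -
  have finF: "finite F"
    using finite_subset[OF assms finite_faces] .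
  have fin_lists: "finite {xs. set xs \<subseteq> A \<and> length xs = k}" if "A \<in> F" for A
    using faces_memD(1)[OF subsetD[OF assms that]] by (rule finite_lists_length_eq)
  have "{xs. length xs = k \<and> set xs \<in> F} \<subseteq> (\<Union>A\<in>F. {xs. set xs \<subseteq> A \<and> length xs = k})"
    by auto
  then have "card {xs. length xs = k \<and> set xs \<in> F}
      \<le> card (\<Union>A\<in>F. {xs. set xs \<subseteq> A \<and> length xs = k})"
    by (rule card_mono[rotated]) (use finF fin_lists in blast)
  also have "\<dots> \<le> (\<Sum>A\<in>F. card {xs. set xs \<subseteq> A \<and> length xs = k})"
    using finF by (rule card_UN_le)
  also have "\<dots> = (\<Sum>A\<in>F. k ^ k)"
  proof (rule sum.cong[OF refl])
    fix A assume "A \<in> F"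
    then show "card {xs. set xs \<subseteq> A \<and> length xs = k} = k ^ k"
      using faces_memD[OF subsetD[OF assms]] by (simp add: card_lists_length_eq)
  qed
  finally show ?thesis
    by simp
qed

lemma card_cochains_with_csupp_in_le:
  assumes FF: "\<And>F. F \<in> FF \<Longrightarrow> F \<subseteq> faces n k \<and> card F = m"
  shows "card {\<phi> :: nat list \<Rightarrow> 'r::{finite, ab_group_add}. \<phi> \<in> cochains n k \<and> csupp n k \<phi> \<in> FF}
    \<le> card FF * card (UNIV :: 'r set) ^ (m * k ^ k)"
proof -
  define ordered where "ordered F = {xs. length xs = k \<and> set xs \<in> F}" for F :: "nat set set"
  define vanishing where
    "vanishing F = {\<phi> :: nat list \<Rightarrow> 'r. \<forall>xs. xs \<notin> ordered F \<longrightarrow> \<phi> xs = 0}" for F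
  have "FF \<subseteq> Pow (faces n k)"
    using FF by blast
  then have finFF: "finite FF"
    using finite_faces by (simp add: finite_subset)
  have fin_ordered: "finite (ordered F)" if "F \<in> FF" for F
    using FF[OF that] finite_ordered_faces unfolding ordered_def by blast
  have "{\<phi> :: nat list \<Rightarrow> 'r. \<phi> \<in> cochains n k \<and> csupp n k \<phi> \<in> FF} \<subseteq> (\<Union>F\<in>FF. vanishing F)"
  proof (rule subsetI)
    fix \<phi> assume "\<phi> \<in> {\<phi> :: nat list \<Rightarrow> 'r. \<phi> \<in> cochains n k \<and> csupp n k \<phi> \<in> FF}"
    then have "\<phi> \<in> cochains n k" "csupp n k \<phi> \<in> FF"
      by simp_all
    moreover have "\<phi> \<in> vanishing (csupp n k \<phi>)"
      using cochain_nonzero_imp_csupp[OF \<open>\<phi> \<in> cochains n k\<close>]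
      by (auto simp: vanishing_def ordered_def)
    ultimately show "\<phi> \<in> (\<Union>F\<in>FF. vanishing F)"
      by blast
  qed
  then have "card {\<phi> :: nat list \<Rightarrow> 'r. \<phi> \<in> cochains n k \<and> csupp n k \<phi> \<in> FF}
      \<le> card (\<Union>F\<in>FF. vanishing F)"
    by (rule card_mono[rotated])
      (use finFF fin_ordered in \<open>simp add: vanishing_def finite_functions_supported_in\<close>)
  also have "\<dots> \<le> (\<Sum>F\<in>FF. card (vanishing F))"
    using finFF by (rule card_UN_le)
  also have "\<dots> \<le> (\<Sum>F\<in>FF. card (UNIV :: 'r set) ^ (m * k ^ k))"
  proof (rule sum_mono)
    fix F assume "F \<in> FF"
    then have "card (ordered F) \<le> m * k ^ k"
      using FF[OF \<open>F \<in> FF\<close>] card_ordered_faces_le[of F n k] by (simp add: ordered_def)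
    moreover have "1 \<le> card (UNIV :: 'r set)"
      by (simp add: Suc_le_eq finite_UNIV_card_ge_0)
    ultimately show "card (vanishing F) \<le> card (UNIV :: 'r set) ^ (m * k ^ k)"
      using fin_ordered[OF \<open>F \<in> FF\<close>]
      by (simp add: vanishing_def card_functions_supported_in power_increasing)
  qed
  finally show ?thesis
    by simp
qed

definition sparse_families :: "nat \<Rightarrow> nat \<Rightarrow> nat \<Rightarrow> real \<Rightarrow> nat \<Rightarrow> real \<Rightarrow> nat set set set" where
  "sparse_families n k m t K M = {F. F \<subseteq> faces n k \<and> card F = m \<and>
     card (heavy_faces n k t F) * n \<le> K \<and> real (card (light_members n k t F)) \<le> M}"

lemma card_Sigma_Pow_times_le:
  assumes "finite HH" and "finite LL" and "\<And>H. H \<in> HH \<Longrightarrow> finite (A H) \<and> card (A H) \<le> K"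
  shows "card (SIGMA H:HH. Pow (A H) \<times> LL) \<le> card HH * 2 ^ K * card LL"
proof -
  have "card (SIGMA H:HH. Pow (A H) \<times> LL) = (\<Sum>H\<in>HH. 2 ^ card (A H) * card LL)"
    using assms by (simp add: card_cartesian_product card_Pow)
  also have "\<dots> \<le> (\<Sum>H\<in>HH. 2 ^ K * card LL)"
    using assms(3) by (intro sum_mono) (simp add: power_increasing)
  finally show ?thesis
    by simp
qed

lemma card_sparse_families_le:
  assumes k: "1 \<le> k"
  shows "card (sparse_families n k m t K M)
    \<le> card {H. H \<subseteq> faces n (k - 1) \<and> card H * n \<le> K} * 2 ^ K
      * card {L. L \<subseteq> faces n k \<and> card L \<le> m \<and> real (card L) \<le> M}"
proof -
  let ?HH = "{H. H \<subseteq> faces n (k - 1) \<and> card H * n \<le> K}"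
  let ?LL = "{L. L \<subseteq> faces n k \<and> card L \<le> m \<and> real (card L) \<le> M}"
  let ?above = "\<lambda>F. faces_above n k (heavy_faces n k t F)"
  let ?code = "\<lambda>F. (heavy_faces n k t F, F \<inter> ?above F, light_members n k t F)"
  have finHH: "finite ?HH"
    by (rule finite_subset[of _ "Pow (faces n (k - 1))"]) (auto simp: finite_faces)
  have finLL: "finite ?LL"
    by (rule finite_subset[of _ "Pow (faces n k)"]) (auto simp: finite_faces)
  have above: "finite (faces_above n k H) \<and> card (faces_above n k H) \<le> K" if "H \<in> ?HH" for H
    using finite_faces[of n k] card_faces_above_le[OF _ k, of H n] that
    by (auto simp: faces_above_def)
  have "inj_on ?code (sparse_families n k m t K M)"
  proof (rule inj_onI)
    fix F F' assume eq: "?code F = ?code F'"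
    have "F \<inter> ?above F = F' \<inter> ?above F'"
      using arg_cong[OF eq, of "\<lambda>p. fst (snd p)"] by simp
    moreover have "light_members n k t F = light_members n k t F'"
      using arg_cong[OF eq, of "\<lambda>p. snd (snd p)"] by simp
    ultimately show "F = F'"
      unfolding light_members_def by (metis Int_Diff_Un)
  qed
  moreover have "?code ` sparse_families n k m t K M \<subseteq> (SIGMA H:?HH. Pow (faces_above n k H) \<times> ?LL)"
  proof (rule image_subsetI)
    fix F assume F: "F \<in> sparse_families n k m t K M"
    then have "card (light_members n k t F) \<le> card F"
      using finite_faces finite_subset
      by (intro card_mono) (auto simp: sparse_families_def light_members_def)
    with F show "?code F \<in> (SIGMA H:?HH. Pow (faces_above n k H) \<times> ?LL)"
      by (auto simp: sparse_families_def light_members_def heavy_faces_def)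
  qed
  moreover have "finite (SIGMA H:?HH. Pow (faces_above n k H) \<times> ?LL)"
    using finHH finLL above by auto
  ultimately have "card (sparse_families n k m t K M)
      \<le> card (SIGMA H:?HH. Pow (faces_above n k H) \<times> ?LL)"
    by (rule card_inj_on_le)
  also have "\<dots> \<le> card ?HH * 2 ^ K * card ?LL"
    using finHH finLL above by (rule card_Sigma_Pow_times_le)
  finally show ?thesis .
qed

lemma card_heavy_choices_le:
  assumes n: "1 \<le> n" and k: "1 \<le> k"
  shows "real (card {H. H \<subseteq> faces n (k - 1) \<and> card H * n \<le> K}) \<le> 2 ^ (k * K)"
proof -
  have "card H \<le> K" if "card H * n \<le> K" for H :: "nat set set"
    by (rule order.trans[OF _ that]) (use n in simp)
  then have eq: "{H. H \<subseteq> faces n (k - 1) \<and> card H * n \<le> K}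
      = {H. H \<subseteq> faces n (k - 1) \<and> card H \<le> K \<and> card H * n \<le> K}"
    by auto
  have bound: "real (card {A. A \<subseteq> faces n (k - 1) \<and> card A = h}) \<le> 2 ^ ((k - 1) * K)"
    if hK: "h * n \<le> K" for h
  proof -
    have "real (card {A. A \<subseteq> faces n (k - 1) \<and> card A = h})
        \<le> real (card (faces n (k - 1))) ^ h / fact h"
      by (rule card_subsets_le_power_div_fact[OF finite_faces])
    also have "\<dots> \<le> real (card (faces n (k - 1))) ^ h / 1"
      by (rule divide_left_mono) (simp_all add: fact_ge_1)
    also have "\<dots> \<le> ((2 ^ n) ^ (k - 1)) ^ h"
      using card_faces_le_two_power[of n "k - 1"] by (simp add: power_mono)
    also have "\<dots> = 2 ^ ((k - 1) * (h * n))"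
      by (simp flip: power_mult add: ac_simps)
    also have "\<dots> \<le> 2 ^ ((k - 1) * K)"
      using hK by (intro power_increasing) simp_all
    finally show ?thesis .
  qed
  have "real (card {H. H \<subseteq> faces n (k - 1) \<and> card H * n \<le> K}) \<le> real (K + 1) * 2 ^ ((k - 1) * K)"
    unfolding eq
    by (rule card_subsets_card_bounded_le[OF finite_faces, where P = "\<lambda>h. h * n \<le> K"])
      (use bound in simp_all)
  also have "\<dots> \<le> 2 ^ K * 2 ^ ((k - 1) * K)"
    using real_add_one_le_two_power[of K] by (intro mult_right_mono) simp_all
  also have "\<dots> = 2 ^ (K + (k - 1) * K)"
    by (simp add: power_add)
  also have "K + (k - 1) * K = k * K"
    using k by (cases k) simp_all
  finally show ?thesis .
qed

lemma card_light_choices_le: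
  assumes n: "1 \<le> n" and k: "1 \<le> k"
  shows "real (card {L. L \<subseteq> faces n k \<and> card L \<le> m \<and> real (card L) \<le> M})
    \<le> real (m + 1) * (exp (real n) * real n powr ((real k - 1) * M))"
proof (rule card_subsets_card_bounded_le[OF finite_faces, where P = "\<lambda>j. real j \<le> M"])
  show "0 \<le> exp (real n) * real n powr ((real k - 1) * M)"
    by simp
  fix j assume jM: "real j \<le> M"
  have "real (card {A. A \<subseteq> faces n k \<and> card A = j}) \<le> real (card (faces n k)) ^ j / fact j"
    by (rule card_subsets_le_power_div_fact[OF finite_faces])
  also have "\<dots> \<le> (real n ^ k) ^ j / fact j"
    using card_faces_le[of n k] by (intro divide_right_mono power_mono) (simp_all flip: of_nat_power)
  also have "(real n ^ k) ^ j = real n ^ ((k - 1) * j) * real n ^ j"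
  proof -
    have "k * j = (k - 1) * j + j"
      using k by (cases k) simp_all
    then show ?thesis
      by (simp flip: power_mult power_add)
  qed
  also have "real n ^ ((k - 1) * j) * real n ^ j / fact j
      \<le> real n powr ((real k - 1) * M) * exp (real n)"
    unfolding times_divide_eq_right[symmetric]
  proof (rule mult_mono)
    have "real n ^ ((k - 1) * j) = real n powr ((real k - 1) * real j)"
      using n k by (simp add: powr_realpow of_nat_diff flip: powr_realpow)
    also have "\<dots> \<le> real n powr ((real k - 1) * M)"
      using n k jM by (intro powr_mono mult_left_mono) simp_all
    finally show "real n ^ ((k - 1) * j) \<le> real n powr ((real k - 1) * M)" .
    show "real n ^ j / fact j \<le> exp (real n)"
      by (rule power_div_fact_le_exp) simp
  qed simp_all
  finally show "real (card {A. A \<subseteq> faces n k \<and> card A = j})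
      \<le> exp (real n) * real n powr ((real k - 1) * M)"
    by (simp add: mult.commute)
qed

lemma card_light_choices_power_le:
  assumes n: "1 \<le> n" and k: "1 \<le> k" and nm: "real n \<le> 2 * real k * real m"
  shows "real (card {L. L \<subseteq> faces n k \<and> card L \<le> m
      \<and> real (card L) \<le> e * real m + 2 * real k * real m / real n})
    \<le> (2 ^ (2 * k ^ 2 + 1) * exp (2 * real k) * real n powr ((real k - 1) * e)) ^ m"
proof -
  let ?y = "real n powr ((real k - 1) * e)"
  have m1: "real (m + 1) \<le> 2 ^ m"
    using real_add_one_le_two_power[of m] by simp
  have "exp (real n) \<le> exp (real m * (2 * real k))"
    using nm by (simp add: algebra_simps)
  then have exp_n: "exp (real n) \<le> exp (2 * real k) ^ m"
    by (simp only: exp_of_nat_mult)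
  have "(real k - 1) * (e * real m + 2 * real k * real m / real n)
      = real m * ((real k - 1) * e) + (real k - 1) * (2 * real k * real m) / real n"
    by (simp add: algebra_simps)
  then have split: "real n powr ((real k - 1) * (e * real m + 2 * real k * real m / real n))
      = ?y ^ m * real n powr ((real k - 1) * (2 * real k * real m) / real n)"
    using n by (simp add: powr_add powr_power)
  have "real n powr ((real k - 1) * (2 * real k * real m) / real n)
      \<le> 2 powr ((real k - 1) * (2 * real k * real m))"
    using k by (intro powr_div_self_le_two_powr[OF n]) simp
  also have "\<dots> \<le> 2 powr real (2 * k ^ 2 * m)"
    by (intro powr_mono) (simp_all add: power2_eq_square algebra_simps)
  also have "\<dots> = (2 ^ (2 * k ^ 2)) ^ m"
    by (subst powr_realpow) (simp_all add: power_mult)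
  finally have rest: "real n powr ((real k - 1) * (2 * real k * real m) / real n)
      \<le> (2 ^ (2 * k ^ 2)) ^ m" .
  have "real (card {L. L \<subseteq> faces n k \<and> card L \<le> m
      \<and> real (card L) \<le> e * real m + 2 * real k * real m / real n})
    \<le> real (m + 1) * (exp (real n)
      * real n powr ((real k - 1) * (e * real m + 2 * real k * real m / real n)))"
    by (rule card_light_choices_le[OF n k])
  also have "\<dots> \<le> 2 ^ m * (exp (2 * real k) ^ m * (?y ^ m * (2 ^ (2 * k ^ 2)) ^ m))"
    unfolding split by (intro mult_mono m1 exp_n rest order_refl) simp_all
  also have "\<dots> = (2 ^ (2 * k ^ 2 + 1) * exp (2 * real k) * ?y) ^ m"
    by (simp add: power_mult_distrib ac_simps)
  finally show ?thesis .
qed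

lemma card_sparse_families_power_le:
  assumes n: "1 \<le> n" and k: "1 \<le> k" and nm: "real n \<le> 2 * real k * real m"
  shows "real (card (sparse_families n k m t (8 * k ^ 5 * m) (e * real m + 2 * real k * real m / real n)))
    \<le> (2 ^ (8 * k ^ 6 + 8 * k ^ 5 + 2 * k ^ 2 + 1) * exp (2 * real k)
      * real n powr ((real k - 1) * e)) ^ m"
proof -
  let ?K = "8 * k ^ 5 * m"
  let ?M = "e * real m + 2 * real k * real m / real n"
  let ?HH = "{H. H \<subseteq> faces n (k - 1) \<and> card H * n \<le> ?K}"
  let ?LL = "{L. L \<subseteq> faces n k \<and> card L \<le> m \<and> real (card L) \<le> ?M}"
  have "real (card (sparse_families n k m t ?K ?M)) \<le> real (card ?HH * 2 ^ ?K * card ?LL)"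
    using card_sparse_families_le[OF k, of n m t ?K ?M] by (simp only: of_nat_le_iff)
  also have "\<dots> = real (card ?HH) * 2 ^ ?K * real (card ?LL)"
    by simp
  also have "\<dots> \<le> (2 ^ (8 * k ^ 6)) ^ m * (2 ^ (8 * k ^ 5)) ^ m
      * (2 ^ (2 * k ^ 2 + 1) * exp (2 * real k) * real n powr ((real k - 1) * e)) ^ m"
  proof (intro mult_mono)
    have "real (card ?HH) \<le> 2 ^ (k * ?K)"
      by (rule card_heavy_choices_le[OF n k])
    also have "k * ?K = 8 * k ^ 6 * m"
      by algebra
    finally show "real (card ?HH) \<le> (2 ^ (8 * k ^ 6)) ^ m"
      by (simp only: power_mult)
    show "(2::real) ^ ?K \<le> (2 ^ (8 * k ^ 5)) ^ m"
      by (simp only: power_mult order_refl)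
    show "real (card ?LL)
        \<le> (2 ^ (2 * k ^ 2 + 1) * exp (2 * real k) * real n powr ((real k - 1) * e)) ^ m"
      by (rule card_light_choices_power_le[OF n k nm])
  qed simp_all
  also have "\<dots> = (2 ^ (8 * k ^ 6 + 8 * k ^ 5 + 2 * k ^ 2 + 1) * exp (2 * real k)
      * real n powr ((real k - 1) * e)) ^ m"
    by (simp add: power_mult_distrib power_add ac_simps)
  finally show ?thesis .
qed

section \<open>The estimate\<close>

lemma heavy_threshold_slack:
  fixes K N :: real
  assumes K: "1 \<le> K" and N: "10 * K ^ 2 \<le> N"
  shows "N - K - K * (N / (8 * K ^ 4)) = N - K - N / (8 * K ^ 3)"
    and "0 < N - K - N / (8 * K ^ 3)"
proof -
  have Kpos: "0 < K"
    using K by simp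
  have K2: "1 \<le> K ^ 2" and K3: "1 \<le> K ^ 3"
    using K by (simp_all add: one_le_power)
  have "K ^ 4 = K * K ^ 3"
    by (simp add: eval_nat_numeral)
  then show "N - K - K * (N / (8 * K ^ 4)) = N - K - N / (8 * K ^ 3)"
    using Kpos by simp
  have Npos: "0 < N"
    using K2 N by linarith
  have "K * 1 \<le> K * K"
    using K by (intro mult_left_mono) simp_all
  then have "K \<le> N / 10"
    using N by (simp add: power2_eq_square)
  moreover have "N / (8 * K ^ 3) \<le> N / 8"
    using Npos Kpos K3 by (intro divide_left_mono) simp_all
  ultimately show "0 < N - K - N / (8 * K ^ 3)"
    using Npos by linarith
qed

lemma heavy_exponent_bounds:
  fixes K \<theta> :: real
  assumes "1 \<le> K" and "0 \<le> \<theta>" and "\<theta> \<le> 1"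
  shows "0 \<le> 1 - \<theta> * (1 - 1 / (2 * K ^ 2))" and "1 - \<theta> * (1 - 1 / (2 * K ^ 2)) \<le> 1"
proof -
  have "1 \<le> K ^ 2"
    using assms(1) by (simp add: one_le_power)
  then have q: "0 \<le> 1 / (2 * K ^ 2)" "1 / (2 * K ^ 2) \<le> 1"
    by (simp_all add: divide_le_eq)
  have "\<theta> * (1 - 1 / (2 * K ^ 2)) \<le> 1"
    by (rule mult_le_one) (use assms(3) q in auto)
  then show "0 \<le> 1 - \<theta> * (1 - 1 / (2 * K ^ 2))"
    by linarith
  have "0 \<le> \<theta> * (1 - 1 / (2 * K ^ 2))"
    using assms(2) q(2) by simp
  then show "1 - \<theta> * (1 - 1 / (2 * K ^ 2)) \<le> 1"
    by linarith
qed

lemma heavy_threshold_cross_term_ge: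
  fixes K N :: real
  assumes K: "1 \<le> K" and N: "10 * K ^ 2 \<le> N"
  shows "2 * K - 1 / 5 - 1 / 4 \<le> 2 * K / N * (N - K - N / (8 * K ^ 3))"
proof -
  have K2: "1 \<le> K ^ 2"
    using K by (simp add: one_le_power)
  have Kpos: "0 < K" and Npos: "0 < N"
    using K K2 N by linarith+
  have "K ^ 3 = K * K ^ 2"
    by (simp add: eval_nat_numeral)
  then have "2 * K / N * (N - K - N / (8 * K ^ 3)) = 2 * K - 2 * K ^ 2 / N - 1 / (4 * K ^ 2)"
    using Kpos Npos by (simp add: field_simps power2_eq_square)
  moreover have "2 * K ^ 2 / N \<le> 1 / 5"
    using N Npos by (simp add: field_simps)
  moreover have "1 / (4 * K ^ 2) \<le> 1 / 4"
    using K2 by (simp add: divide_le_eq)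
  ultimately show ?thesis
    by linarith
qed

lemma light_bound_ineq:
  fixes K N \<theta> :: real
  assumes K: "1 \<le> K" and N: "10 * K ^ 2 \<le> N" and \<theta>: "1 / (2 * K) \<le> \<theta>" "\<theta> \<le> 1"
  shows "(1 - \<theta>) * N \<le> (1 - \<theta> * (1 - 1 / (2 * K ^ 2)) + 2 * K / N) * (N - K - N / (8 * K ^ 3))"
proof -
  define e where "e = 1 - \<theta> * (1 - 1 / (2 * K ^ 2))"
  define P where "P = N - K - N / (8 * K ^ 3)"
  have K2: "1 \<le> K ^ 2"
    using K by (simp add: one_le_power)
  have Kpos: "0 < K" and Npos: "0 < N"
    using K K2 N by linarith+
  have "0 < 1 / (2 * K)"
    using Kpos by simp
  then have "0 \<le> \<theta>"
    using \<theta>(1) by linarith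
  note e = heavy_exponent_bounds[OF K this \<theta>(2), folded e_def]
  have eP: "e * N - K - N / (8 * K ^ 3) \<le> e * P"
  proof -
    have "e * K \<le> K"
      using e Kpos by (simp add: mult_left_le_one_le)
    moreover have "e * (N / (8 * K ^ 3)) \<le> N / (8 * K ^ 3)"
      using e Npos Kpos by (intro mult_left_le_one_le) simp_all
    ultimately show ?thesis
      by (simp add: P_def algebra_simps)
  qed
  have eN: "(1 - \<theta>) * N + N / (4 * K ^ 3) \<le> e * N"
  proof -
    have "K ^ 3 = K * K ^ 2"
      by (simp add: eval_nat_numeral)
    then have "N / (4 * K ^ 3) = 1 / (2 * K) * N / (2 * K ^ 2)"
      using Kpos by simp
    also have "\<dots> \<le> \<theta> * N / (2 * K ^ 2)"
      using \<theta>(1) Npos K2 by (intro divide_right_mono mult_right_mono) auto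
    moreover have "e * N = (1 - \<theta>) * N + \<theta> * N / (2 * K ^ 2)"
      by (simp add: e_def algebra_simps)
    ultimately show ?thesis
      by linarith
  qed
  have "N / (8 * K ^ 3) \<le> N / (4 * K ^ 3)"
    using Npos Kpos by (intro divide_left_mono) simp_all
  moreover have "(e + 2 * K / N) * P = e * P + 2 * K / N * P"
    by (simp add: algebra_simps)
  ultimately have "(1 - \<theta>) * N \<le> (e + 2 * K / N) * P"
    using eP eN heavy_threshold_cross_term_ge[OF K N, folded P_def] K by linarith
  then show ?thesis
    by (simp add: e_def P_def)
qed

lemma csupp_in_sparse_families:
  fixes \<phi> :: "nat list \<Rightarrow> 'r::ab_group_add"
  assumes k: "1 \<le> k" and n: "10 * real k ^ 2 \<le> real n"
    and \<theta>: "1 / (2 * real k) \<le> \<theta>" "\<theta> \<le> 1"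
    and m: "card (csupp n k \<phi>) = m" and b: "real (cbnd n k \<phi>) = (1 - \<theta>) * real m * real n"
  shows "csupp n k \<phi> \<in> sparse_families n k m (real n / (8 * real k ^ 4)) (8 * k ^ 5 * m)
    ((1 - \<theta> * (1 - 1 / (2 * real k ^ 2))) * real m + 2 * real k * real m / real n)"
proof -
  define t where "t = real n / (8 * real k ^ 4)"
  define e where "e = 1 - \<theta> * (1 - 1 / (2 * real k ^ 2))"
  define P where "P = real n - real k - real k * t"
  let ?F = "csupp n k \<phi>"
  have k1: "1 \<le> real k"
    using k by simp
  note slack = heavy_threshold_slack[OF k1 n, folded t_def P_def]
  have "real (card (heavy_faces n k t ?F) * n)
      = real (card (heavy_faces n k t ?F)) * t * (8 * real k ^ 4)"
    using k1 by (simp add: t_def)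
  also have "\<dots> \<le> real (k * m) * (8 * real k ^ 4)"
    using card_heavy_faces_le[OF csupp_subset_faces[of n k \<phi>] k, where t = t] m
    by (intro mult_right_mono) simp_all
  also have "\<dots> = real (8 * k ^ 5 * m)"
    by (simp add: eval_nat_numeral)
  finally have heavy: "card (heavy_faces n k t ?F) * n \<le> 8 * k ^ 5 * m"
    by (simp only: of_nat_le_iff)
  have "real (card (light_members n k t ?F)) * P \<le> real (cbnd n k \<phi>)"
    using light_members_mult_le_cbnd[OF k, of n t \<phi>] by (simp add: P_def mult.commute)
  also have "\<dots> = real m * ((1 - \<theta>) * real n)"
    using b by simp
  also have "\<dots> \<le> real m * ((e + 2 * real k / real n) * P)"
    using light_bound_ineq[OF k1 n \<theta>] slack(1) by (intro mult_left_mono) (simp_all add: e_def)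
  also have "\<dots> = (e * real m + 2 * real k * real m / real n) * P"
    by (simp add: algebra_simps)
  finally have light: "real (card (light_members n k t ?F)) \<le> e * real m + 2 * real k * real m / real n"
    using slack by simp
  show ?thesis
    using heavy light csupp_subset_faces m by (simp add: sparse_families_def t_def e_def)
qed

lemma gcount_le_card_sparse_families:
  fixes R :: "'r::{finite, ab_group_add} itself"
  assumes k: "1 \<le> k" and n: "10 * real k ^ 2 \<le> real n"
    and \<theta>: "1 / (2 * real k) \<le> \<theta>" "\<theta> \<le> 1"
  shows "gcount R n k m \<theta> \<le> card (sparse_families n k m (real n / (8 * real k ^ 4)) (8 * k ^ 5 * m)
      ((1 - \<theta> * (1 - 1 / (2 * real k ^ 2))) * real m + 2 * real k * real m / real n))
    * card (UNIV :: 'r set) ^ (m * k ^ k)"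
proof -
  let ?FF = "sparse_families n k m (real n / (8 * real k ^ 4)) (8 * k ^ 5 * m)
      ((1 - \<theta> * (1 - 1 / (2 * real k ^ 2))) * real m + 2 * real k * real m / real n)"
  have "{\<phi> \<in> (Gset n k :: (nat list \<Rightarrow> 'r) set). card (csupp n k \<phi>) = m
      \<and> real (cbnd n k \<phi>) = (1 - \<theta>) * real m * real n} \<subseteq> {\<phi>. \<phi> \<in> cochains n k \<and> csupp n k \<phi> \<in> ?FF}"
  proof (rule subsetI)
    fix \<phi> :: "nat list \<Rightarrow> 'r"
    assume "\<phi> \<in> {\<phi> \<in> Gset n k. card (csupp n k \<phi>) = m
      \<and> real (cbnd n k \<phi>) = (1 - \<theta>) * real m * real n}"
    then have \<phi>: "\<phi> \<in> cochains n k" "card (csupp n k \<phi>) = m"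
      "real (cbnd n k \<phi>) = (1 - \<theta>) * real m * real n"
      by (simp_all add: Gset_def)
    with csupp_in_sparse_families[OF k n \<theta> \<phi>(2,3)]
    show "\<phi> \<in> {\<phi>. \<phi> \<in> cochains n k \<and> csupp n k \<phi> \<in> ?FF}"
      by simp
  qed
  then have "gcount R n k m \<theta> \<le> card {\<phi> :: nat list \<Rightarrow> 'r. \<phi> \<in> cochains n k \<and> csupp n k \<phi> \<in> ?FF}"
    unfolding gcount_def by (rule card_mono[rotated]) (simp add: finite_cochains)
  also have "\<dots> \<le> card ?FF * card (UNIV :: 'r set) ^ (m * k ^ k)"
    by (rule card_cochains_with_csupp_in_le) (simp add: sparse_families_def)
  finally show ?thesis .
qed

theorem proposition3p1:
  fixes k :: nat and r :: nat and R :: "'r::{finite, ab_group_add} itself"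
  assumes "k \<ge> 1"
    and "card (UNIV :: 'r set) = r"
  shows "\<exists>c1::real. \<forall>n m (\<theta>::real).
    real n \<ge> 10 * real k ^ 2 \<longrightarrow> real m \<ge> real n / (2 * real k) \<longrightarrow>
    1 / (2 * real k) \<le> \<theta> \<longrightarrow> \<theta> \<le> 1 \<longrightarrow>
    real (gcount R n k m \<theta>)
      \<le> (c1 * real n powr ((real k - 1) * (1 - \<theta> * (1 - 1 / (2 * real k ^ 2))))) ^ m"
proof (intro exI[of _ "real r ^ k ^ k * 2 ^ (8 * k ^ 6 + 8 * k ^ 5 + 2 * k ^ 2 + 1) * exp (2 * real k)"]
    allI impI)
  fix n m :: nat and \<theta> :: real
  assume n: "10 * real k ^ 2 \<le> real n" and m: "real n / (2 * real k) \<le> real m"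
    and \<theta>: "1 / (2 * real k) \<le> \<theta>" "\<theta> \<le> 1"
  define e where "e = 1 - \<theta> * (1 - 1 / (2 * real k ^ 2))"
  let ?FF = "sparse_families n k m (real n / (8 * real k ^ 4)) (8 * k ^ 5 * m)
    (e * real m + 2 * real k * real m / real n)"
  have "1 \<le> real k ^ 2"
    using assms(1) by (simp add: one_le_power)
  then have "1 \<le> real n"
    using n by linarith
  then have n1: "1 \<le> n"
    by simp
  have nm: "real n \<le> 2 * real k * real m"
    using m assms(1) by (simp add: field_simps)
  have "real (gcount R n k m \<theta>) \<le> real (card ?FF * r ^ (m * k ^ k))"
    using gcount_le_card_sparse_families[OF assms(1) n \<theta>, of R m]
    unfolding assms(2) e_def by (simp only: of_nat_le_iff)
  also have "\<dots> = real (card ?FF) * (real r ^ k ^ k) ^ m"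
    by (simp add: power_mult mult.commute[of m])
  also have "\<dots> \<le> (2 ^ (8 * k ^ 6 + 8 * k ^ 5 + 2 * k ^ 2 + 1) * exp (2 * real k)
      * real n powr ((real k - 1) * e)) ^ m * (real r ^ k ^ k) ^ m"
    using card_sparse_families_power_le[OF n1 assms(1) nm] by (rule mult_right_mono) simp
  finally show "real (gcount R n k m \<theta>) \<le> (real r ^ k ^ k * 2 ^ (8 * k ^ 6 + 8 * k ^ 5 + 2 * k ^ 2 + 1)
      * exp (2 * real k) * real n powr ((real k - 1) * (1 - \<theta> * (1 - 1 / (2 * real k ^ 2))))) ^ m"
    by (simp add: e_def power_mult_distrib ac_simps)
qed

end
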